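(* Let $\Theta$ be a $k\times k$ complex matrix whose spectrum is disjoint from $-\mathbb{N}$, and let $\mathcal{E}(\Theta)$ be the free $B$-module with basis $e=(e_1,\dots,e_k)$ endowed with the action of $a$ determined by $ae=\Theta\,be$ (i.e. $ae_j=\sum_i\Theta_{j,i}be_i$) and $a(S(b)x)=S(b)ax+b^2S'(b)x$ for $S\in B$. Then the continuous actions of the algebras $\mathbb{C}[a]$ and $B$ on $\mathcal{E}(\Theta)$ are the restrictions of a continuous left action of $\tilde{\mathcal{A}}_{conv.}$ on $\mathcal{E}(\Theta)$.
   Context: $\tilde{\mathcal{A}}_{conv.}$ is the algebra of formal series $\sum\gamma_{p,q}a^pb^q$ in variables $a,b$ with $ab-ba=b^2$ (product extending that of the polynomial algebra with this relation) such that $|\gamma_{p,q}|\le C_RR^{p+q}q!$ for some $R>1$, $C_R>0$. $B=\mathbb{C}\{\{b\}\}\subset\tilde{\mathcal{A}}_{conv.}$ is the subalgebra of series $S(b)=\sum c_qb^q$ with $|c_q|\le CR^qq!$ for some $C,R$, and $S'$ is the derivative in $b$. The topologies are the natural inductive limit topologies defined by these Gevrey bounds (on $\mathcal{E}(\Theta)\simeq B^k$ coordinatewise). *)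

theory Defs
  imports "HOL-Analysis.Analysis"
begin

text \<open>Formal series in b are coefficient sequences c :: nat => complex (S(b) = sum c q b^q).
 Formal series sum gamma p q a^p b^q (normally ordered: powers of a to the left) are
 coefficient functions gamma :: nat => nat => complex.\<close>

definition gevreyB :: "(nat \<Rightarrow> complex) set" where
  "gevreyB = {c. \<exists>C R. C > 0 \<and> R > 1 \<and> (\<forall>q. norm (c q) \<le> C * R ^ q * fact q)}"

definition Atilde_conv :: "(nat \<Rightarrow> nat \<Rightarrow> complex) set" where
  "Atilde_conv = {g. \<exists>C R. C > 0 \<and> R > 1 \<and>
      (\<forall>p q. norm (g p q) \<le> C * R ^ (p + q) * fact q)}"

text \<open>The free B-module with basis e indexed by the finite type 'k: coordinates in B.\<close>
definition EThetaSpace :: "('k::finite \<Rightarrow> nat \<Rightarrow> complex) set" where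
  "EThetaSpace = {x. \<forall>i. x i \<in> gevreyB}"

text \<open>Product in the algebra with ab - ba = b^2, extending the polynomial product.
 It uses  b^q a^r = sum_j binom(r,j) (-1)^j q(q+1)...(q+j-1) a^(r-j) b^(q+j), so
 (a^p b^q)(a^r b^s) = sum_j binom(r,j) (-1)^j (q)_j a^(p+r-j) b^(q+j+s).
 The coefficient at a^m b^n collects p <= m, q,j,s with q+j+s = n, r = m-p+j.\<close>
definition amul :: "(nat \<Rightarrow> nat \<Rightarrow> complex) \<Rightarrow> (nat \<Rightarrow> nat \<Rightarrow> complex) \<Rightarrow> nat \<Rightarrow> nat \<Rightarrow> complex" where
  "amul g h m n = (\<Sum>p\<le>m. \<Sum>q\<le>n. \<Sum>j\<le>n. \<Sum>s\<le>n.
      if q + j + s = n then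
        g p q * h (m - p + j) s * of_nat ((m - p + j) choose j) * (-1) ^ j
          * pochhammer (of_nat q) j
      else 0)"

definition a_elem :: "nat \<Rightarrow> nat \<Rightarrow> complex" where
  "a_elem p q = (if p = 1 \<and> q = 0 then 1 else 0)"

definition embB :: "(nat \<Rightarrow> complex) \<Rightarrow> nat \<Rightarrow> nat \<Rightarrow> complex" where
  "embB S p q = (if p = 0 then S q else 0)"

definition B_smul :: "(nat \<Rightarrow> complex) \<Rightarrow> ('k \<Rightarrow> nat \<Rightarrow> complex) \<Rightarrow> 'k \<Rightarrow> nat \<Rightarrow> complex" where
  "B_smul S x i n = (\<Sum>q\<le>n. S q * x i (n - q))"

text \<open>Action of a on E(Theta): for x = sum_j S_j(b) e_j,
 a x = sum_j (S_j(b) a e_j + b^2 S_j'(b) e_j) with a e_j = sum_i Theta_{j,i} b e_i.\<close>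
definition a_act :: "complex^'k^'k \<Rightarrow> ('k \<Rightarrow> nat \<Rightarrow> complex) \<Rightarrow> 'k \<Rightarrow> nat \<Rightarrow> complex" where
  "a_act Theta x i n = (if n = 0 then 0 else
      (\<Sum>j\<in>UNIV. Theta $ j $ i * x j (n - 1)) + of_nat (n - 1) * x i (n - 1))"

definition mat_spectrum :: "complex^'k^'k \<Rightarrow> complex set" where
  "mat_spectrum A = {\<mu>. \<exists>v. v \<noteq> 0 \<and> A *v v = \<mu> *s v}"

end

theory Submission
  imports Defs
begin

text \<open>A series \<open>g = \<Sum> g p q a ^ p b ^ q\<close> acts by \<open>x \<mapsto> \<Sum> g p q a ^ p (b ^ q x)\<close>. Since \<open>a\<close> raises
  the order in \<open>b\<close> by one, \<open>a ^ p b ^ q\<close> raises it by \<open>p + q\<close>, so each coefficient of the result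
  is a finite sum. Compatibility with the product of the algebra reduces to the commutation rule
  \<open>b ^ q a ^ r = \<Sum>j\<le>r. (r choose j) (-1) ^ j (q)\<^sub>j a ^ (r - j) b ^ (q + j)\<close>, which is how the
  product was defined. For continuity, the \<open>b ^ (m + p)\<close> coefficient of \<open>a ^ p y\<close> is at most
  \<open>(K + 1) ^ p (m + p)! / m!\<close> times the \<open>b ^ m\<close> coefficient of \<open>y\<close> (with \<open>K\<close> the sum of the
  absolute values of the entries of \<open>Theta\<close>), and \<open>q! m! \<le> (q + m)!\<close> absorbs the factorial
  of the Gevrey bound on \<open>g\<close>; the radius grows by the factor \<open>4 (K + 1)\<close>.\<close>

definition linear_op :: "(('a \<Rightarrow> 'b \<Rightarrow> complex) \<Rightarrow> ('c \<Rightarrow> 'd \<Rightarrow> complex)) \<Rightarrow> bool" where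
  "linear_op L \<longleftrightarrow> (\<forall>x y c. L (\<lambda>i n. x i n + c * y i n) = (\<lambda>i n. L x i n + c * L y i n))"

lemma linear_opD:
  "linear_op L \<Longrightarrow> L (\<lambda>i n. x i n + c * y i n) = (\<lambda>i n. L x i n + c * L y i n)"
  unfolding linear_op_def by blast

lemma linear_op_zero:
  assumes "linear_op L"
  shows "L (\<lambda>i n. 0) = (\<lambda>i n. 0)"
  using linear_opD[OF assms, of "\<lambda>i n. 0" "- 1" "\<lambda>i n. 0"] by simp

lemma linear_op_add:
  "linear_op L \<Longrightarrow> L (\<lambda>i n. x i n + y i n) = (\<lambda>i n. L x i n + L y i n)"
  using linear_opD[of L x 1 y] by simp

lemma linear_op_smul:
  assumes "linear_op L"
  shows "L (\<lambda>i n. c * x i n) = (\<lambda>i n. c * L x i n)"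
  using linear_opD[OF assms, of "\<lambda>i n. 0" c x] by (simp add: linear_op_zero[OF assms])

lemma linear_op_diff:
  "linear_op L \<Longrightarrow> L (\<lambda>i n. x i n - c * y i n) = (\<lambda>i n. L x i n - c * L y i n)"
  using linear_opD[of L x "- c" y] by simp

lemma linear_op_sum:
  assumes "linear_op L"
  shows "L (\<lambda>i n. \<Sum>k\<in>F. f k i n) = (\<lambda>i n. \<Sum>k\<in>F. L (f k) i n)"
proof (induction F rule: infinite_finite_induct)
  case (insert k F)
  then show ?case
    by (simp add: linear_op_add[OF assms, of "f k" "\<lambda>i n. \<Sum>k\<in>F. f k i n"])
qed (simp_all add: linear_op_zero[OF assms])

lemma linear_op_comp: "linear_op L \<Longrightarrow> linear_op L' \<Longrightarrow> linear_op (L \<circ> L')"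
  unfolding linear_op_def by simp

lemma linear_op_funpow:
  fixes L :: "('a \<Rightarrow> 'b \<Rightarrow> complex) \<Rightarrow> ('a \<Rightarrow> 'b \<Rightarrow> complex)"
  assumes "linear_op L"
  shows "linear_op (L ^^ p)"
proof (induction p)
  case 0
  then show ?case by (simp add: linear_op_def)
next
  case (Suc p)
  then show ?case
    using linear_op_comp[OF assms Suc.IH] by (simp only: funpow.simps(2))
qed

lemma linear_op_a_act: "linear_op (a_act Theta)"
  unfolding linear_op_def a_act_def
  by (auto simp: sum.distrib sum_distrib_left algebra_simps intro!: ext)

definition bshift :: "nat \<Rightarrow> ('k \<Rightarrow> nat \<Rightarrow> complex) \<Rightarrow> ('k \<Rightarrow> nat \<Rightarrow> complex)" where
  "bshift q x = (\<lambda>i n. if q \<le> n then x i (n - q) else 0)"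

lemma linear_op_bshift: "linear_op (bshift q)"
  unfolding linear_op_def bshift_def by (auto intro!: ext)

lemma bshift_0 [simp]: "bshift 0 x = x"
  unfolding bshift_def by simp

lemma bshift_bshift: "bshift q (bshift s x) = bshift (q + s) x"
  unfolding bshift_def by (auto intro!: ext simp: diff_diff_add)

text \<open>The relation \<open>b ^ m a = a b ^ m - m b ^ (m + 1)\<close>, a consequence of \<open>ab - ba = b\<^sup>2\<close>.\<close>
lemma bshift_a_act:
  "bshift m (a_act Theta y) = (\<lambda>i n. a_act Theta (bshift m y) i n - of_nat m * bshift (Suc m) y i n)"
proof (intro ext)
  fix i n
  show "bshift m (a_act Theta y) i n = a_act Theta (bshift m y) i n - of_nat m * bshift (Suc m) y i n"
  proof (cases "Suc m \<le> n")
    case True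
    then obtain d where "n = Suc m + d" by (metis le_add_diff_inverse)
    then show ?thesis unfolding bshift_def a_act_def by (simp add: algebra_simps)
  qed (auto simp: bshift_def a_act_def)
qed

definition comm_coeff :: "nat \<Rightarrow> nat \<Rightarrow> nat \<Rightarrow> complex" where
  "comm_coeff r j q = of_nat (r choose j) * (-1) ^ j * pochhammer (of_nat q) j"

lemma comm_coeff_Suc_sum:
  fixes v :: "nat \<Rightarrow> complex"
  shows "(\<Sum>j\<le>r. comm_coeff r j q * v j) - (\<Sum>j\<le>r. comm_coeff r j q * of_nat (q + j) * v (Suc j))
       = (\<Sum>j\<le>Suc r. comm_coeff (Suc r) j q * v j)"
proof -
  have pascal: "comm_coeff (Suc r) (Suc j) q = comm_coeff r (Suc j) q - comm_coeff r j q * of_nat (q + j)" for j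
    unfolding comm_coeff_def by (simp add: pochhammer_rec' algebra_simps)
  have "(\<Sum>j\<le>r. comm_coeff r j q * v j) = (\<Sum>j\<le>Suc r. comm_coeff r j q * v j)"
    by (simp add: comm_coeff_def)
  also have "\<dots> = comm_coeff r 0 q * v 0 + (\<Sum>j\<le>r. comm_coeff r (Suc j) q * v (Suc j))"
    by (rule sum.atMost_Suc_shift)
  finally have shifted: "(\<Sum>j\<le>r. comm_coeff r j q * v j)
      = comm_coeff r 0 q * v 0 + (\<Sum>j\<le>r. comm_coeff r (Suc j) q * v (Suc j))" .
  show ?thesis
    unfolding shifted sum.atMost_Suc_shift[of _ r] pascal
    by (simp add: comm_coeff_def algebra_simps sum_subtractf)
qed

lemma bshift_a_act_pow:
  "bshift q ((a_act Theta ^^ r) y)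
     = (\<lambda>i n. \<Sum>j\<le>r. comm_coeff r j q * (a_act Theta ^^ (r - j)) (bshift (q + j) y) i n)"
proof (induction r arbitrary: y)
  case 0
  then show ?case by (simp add: comm_coeff_def)
next
  case (Suc r)
  let ?A = "a_act Theta"
  define v where "v i n j = (?A ^^ (Suc r - j)) (bshift (q + j) y) i n" for i n j
  have "bshift q ((?A ^^ Suc r) y) = bshift q ((?A ^^ r) (?A y))"
    by (simp add: funpow_Suc_right del: funpow.simps)
  also have "\<dots> = (\<lambda>i n. \<Sum>j\<le>r. comm_coeff r j q * (?A ^^ (r - j)) (bshift (q + j) (?A y)) i n)"
    by (rule Suc.IH)
  also have "\<dots> = (\<lambda>i n. (\<Sum>j\<le>r. comm_coeff r j q * v i n j)
                      - (\<Sum>j\<le>r. comm_coeff r j q * of_nat (q + j) * v i n (Suc j)))"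
  proof (intro ext)
    fix i n
    have step: "(?A ^^ (r - j)) (bshift (q + j) (?A y)) i n = v i n j - of_nat (q + j) * v i n (Suc j)"
      if "j \<le> r" for j
      using that unfolding bshift_a_act linear_op_diff[OF linear_op_funpow[OF linear_op_a_act]] v_def
      by (simp add: Suc_diff_le funpow_Suc_right del: funpow.simps)
    have "(\<Sum>j\<le>r. comm_coeff r j q * (?A ^^ (r - j)) (bshift (q + j) (?A y)) i n)
        = (\<Sum>j\<le>r. comm_coeff r j q * (v i n j - of_nat (q + j) * v i n (Suc j)))"
      by (intro sum.cong refl) (simp add: step)
    then show "(\<Sum>j\<le>r. comm_coeff r j q * (?A ^^ (r - j)) (bshift (q + j) (?A y)) i n)
        = (\<Sum>j\<le>r. comm_coeff r j q * v i n j) - (\<Sum>j\<le>r. comm_coeff r j q * of_nat (q + j) * v i n (Suc j))"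
      by (simp add: right_diff_distrib sum_subtractf mult.assoc)
  qed
  also have "\<dots> = (\<lambda>i n. \<Sum>j\<le>Suc r. comm_coeff (Suc r) j q * v i n j)"
    by (simp only: comm_coeff_Suc_sum)
  finally show ?case unfolding v_def .
qed

definition monomial_act ::
    "complex^'k^'k \<Rightarrow> nat \<Rightarrow> nat \<Rightarrow> ('k \<Rightarrow> nat \<Rightarrow> complex) \<Rightarrow> ('k \<Rightarrow> nat \<Rightarrow> complex)" where
  "monomial_act Theta p q x = (a_act Theta ^^ p) (bshift q x)"

lemma linear_op_monomial_act: "linear_op (monomial_act Theta p q)"
  using linear_op_comp[OF linear_op_funpow[OF linear_op_a_act] linear_op_bshift]
  by (simp add: monomial_act_def[abs_def] comp_def)

lemma monomial_act_monomial_act: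
  "monomial_act Theta p q (monomial_act Theta r s x)
     = (\<lambda>i n. \<Sum>j\<le>r. comm_coeff r j q * monomial_act Theta (p + r - j) (q + j + s) x i n)"
proof -
  let ?A = "a_act Theta"
  have pow: "linear_op (?A ^^ p)" by (rule linear_op_funpow[OF linear_op_a_act])
  have "monomial_act Theta p q (monomial_act Theta r s x)
      = (?A ^^ p) (\<lambda>i n. \<Sum>j\<le>r. comm_coeff r j q * (?A ^^ (r - j)) (bshift (q + j + s) x) i n)"
    unfolding monomial_act_def bshift_a_act_pow bshift_bshift by (simp add: add.assoc)
  also have "\<dots> = (\<lambda>i n. \<Sum>j\<le>r. comm_coeff r j q * (?A ^^ p) ((?A ^^ (r - j)) (bshift (q + j + s) x)) i n)"
    by (simp add: linear_op_sum[OF pow] linear_op_smul[OF pow])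
  also have "\<dots> = (\<lambda>i n. \<Sum>j\<le>r. comm_coeff r j q * monomial_act Theta (p + r - j) (q + j + s) x i n)"
  proof (intro ext sum.cong refl)
    fix i n j
    assume "j \<in> {..r}"
    then have "p + r - j = p + (r - j)" by simp
    then show "comm_coeff r j q * (?A ^^ p) ((?A ^^ (r - j)) (bshift (q + j + s) x)) i n
        = comm_coeff r j q * monomial_act Theta (p + r - j) (q + j + s) x i n"
      unfolding monomial_act_def by (simp only: funpow_add o_apply)
  qed
  finally show ?thesis .
qed

lemma a_act_pow_vanishes_below:
  assumes "\<And>i m. m < d \<Longrightarrow> y i m = 0" and "m < d + p"
  shows "(a_act Theta ^^ p) y i m = 0"
  using assms(2)
proof (induction p arbitrary: m i)
  case 0
  then show ?case using assms(1) by simp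
next
  case (Suc p)
  then show ?case by (cases m) (simp_all add: a_act_def)
qed

lemma monomial_act_vanishes_below: "n < p + q \<Longrightarrow> monomial_act Theta p q x i n = 0"
  unfolding monomial_act_def
  by (rule a_act_pow_vanishes_below[where d = q]) (auto simp: bshift_def)

lemma a_act_pow_local:
  assumes "\<And>i m. m \<le> n \<Longrightarrow> y i m = z i m" and "m \<le> n"
  shows "(a_act Theta ^^ p) y i m = (a_act Theta ^^ p) z i m"
  using assms(2)
proof (induction p arbitrary: m i)
  case 0
  then show ?case using assms(1) by simp
next
  case (Suc p)
  then show ?case by (simp add: a_act_def)
qed

lemma monomial_act_local:
  assumes "\<And>i m. m \<le> n \<Longrightarrow> y i m = z i m"
  shows "monomial_act Theta p q y i n = monomial_act Theta p q z i n"
  unfolding monomial_act_def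
  by (rule a_act_pow_local[where n = n]) (auto simp: bshift_def assms)

definition series_act ::
    "complex^'k^'k \<Rightarrow> (nat \<Rightarrow> nat \<Rightarrow> complex) \<Rightarrow> ('k \<Rightarrow> nat \<Rightarrow> complex) \<Rightarrow> ('k \<Rightarrow> nat \<Rightarrow> complex)" where
  "series_act Theta g x = (\<lambda>i n. \<Sum>p\<le>n. \<Sum>q\<le>n. g p q * monomial_act Theta p q x i n)"

lemma series_act_truncate:
  assumes "m \<le> N"
  shows "series_act Theta g x i m = (\<Sum>p\<le>N. \<Sum>q\<le>N. g p q * monomial_act Theta p q x i m)"
proof -
  have "series_act Theta g x i m = (\<Sum>p\<le>m. \<Sum>q\<le>N. g p q * monomial_act Theta p q x i m)"
    unfolding series_act_def using assms
    by (intro sum.cong refl sum.mono_neutral_left) (auto simp: monomial_act_vanishes_below)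
  also have "\<dots> = (\<Sum>p\<le>N. \<Sum>q\<le>N. g p q * monomial_act Theta p q x i m)"
    using assms
    by (intro sum.mono_neutral_left) (auto simp: monomial_act_vanishes_below intro!: sum.neutral)
  finally show ?thesis .
qed

lemma linear_op_series_act: "linear_op (series_act Theta g)"
  unfolding linear_op_def series_act_def linear_opD[OF linear_op_monomial_act]
  by (simp add: sum.distrib sum_distrib_left algebra_simps)

lemma series_act_add:
  "series_act Theta (\<lambda>p q. g p q + h p q) x = (\<lambda>i n. series_act Theta g x i n + series_act Theta h x i n)"
  unfolding series_act_def by (simp add: sum.distrib distrib_right)

lemma series_act_smul:
  "series_act Theta (\<lambda>p q. c * g p q) x = (\<lambda>i n. c * series_act Theta g x i n)"
  unfolding series_act_def by (simp add: sum_distrib_left mult.assoc)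

lemma series_act_a_elem: "series_act Theta a_elem x = a_act Theta x"
proof (intro ext)
  fix i n
  have "series_act Theta a_elem x i n = (\<Sum>p\<le>n. if p = 1 then a_act Theta x i n else 0)"
    unfolding series_act_def a_elem_def
    by (intro sum.cong refl) (simp add: monomial_act_def if_distrib[where f = "\<lambda>s. s * _"] cong: if_cong)
  also have "\<dots> = a_act Theta x i n"
    by (simp add: a_act_def)
  finally show "series_act Theta a_elem x i n = a_act Theta x i n" .
qed

lemma series_act_embB: "series_act Theta (embB S) x = B_smul S x"
proof (intro ext)
  fix i n
  have "series_act Theta (embB S) x i n
      = (\<Sum>p\<le>n. if p = 0 then (\<Sum>q\<le>n. S q * monomial_act Theta 0 q x i n) else 0)"
    unfolding series_act_def embB_def by (intro sum.cong refl) simp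
  also have "\<dots> = (\<Sum>q\<le>n. S q * monomial_act Theta 0 q x i n)"
    by simp
  also have "\<dots> = B_smul S x i n"
    unfolding B_smul_def monomial_act_def bshift_def by (intro sum.cong refl) simp
  finally show "series_act Theta (embB S) x i n = B_smul S x i n" .
qed

lemma monomial_act_series_act:
  "monomial_act Theta p q (series_act Theta h x) i n
     = (\<Sum>r\<le>n. \<Sum>s\<le>n. \<Sum>j\<le>r. h r s * (comm_coeff r j q * monomial_act Theta (p + r - j) (q + j + s) x i n))"
proof -
  have lin: "linear_op (monomial_act Theta p q)" by (rule linear_op_monomial_act)
  have "monomial_act Theta p q (series_act Theta h x) i n
      = monomial_act Theta p q (\<lambda>i m. \<Sum>r\<le>n. \<Sum>s\<le>n. h r s * monomial_act Theta r s x i m) i n"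
    by (rule monomial_act_local) (simp add: series_act_truncate)
  also have "\<dots> = (\<Sum>r\<le>n. \<Sum>s\<le>n. h r s * monomial_act Theta p q (monomial_act Theta r s x) i n)"
    by (simp add: linear_op_sum[OF lin] linear_op_smul[OF lin])
  finally show ?thesis
    by (simp add: monomial_act_monomial_act sum_distrib_left)
qed

text \<open>Reindexing along \<open>(p, q, r, s, j) \<mapsto> (p + r - j, q + j + s, p, q, j, s)\<close>; off its image
  (and off \<open>p + q + r + s \<le> n\<close>) all summands vanish.\<close>
lemma amul_sum_reindex:
  fixes Psi :: "nat \<Rightarrow> nat \<Rightarrow> nat \<Rightarrow> nat \<Rightarrow> nat \<Rightarrow> complex"
  assumes vanish: "\<And>p q r s j. j \<le> r \<Longrightarrow> n < p + q + r + s \<Longrightarrow> Psi p q r s j = 0"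
  shows "(\<Sum>m\<le>n. \<Sum>n'\<le>n. \<Sum>p\<le>m. \<Sum>q\<le>n'. \<Sum>j\<le>n'. \<Sum>s\<le>n'.
            if q + j + s = n' then Psi p q (m - p + j) s j else 0)
       = (\<Sum>p\<le>n. \<Sum>q\<le>n. \<Sum>r\<le>n. \<Sum>s\<le>n. \<Sum>j\<le>r. Psi p q r s j)"
proof -
  define W where "W = {(p, q, r, s, j). j \<le> r \<and> p + q + r + s \<le> n}"
  define f where "f = (\<lambda>(m, n', p, q, j, s). if q + j + s = n' then Psi p q (m - p + j) s j else 0)"
  define L where "L = (SIGMA m:{..n}. SIGMA n':{..n}. SIGMA p:{..m}. SIGMA q:{..n'}. SIGMA j:{..n'}. {..n'})"
  define R where "R = (SIGMA p:{..n}. SIGMA q:{..n}. SIGMA r:{..n}. SIGMA s:{..n}. {..r})"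
  define phi where "phi = (\<lambda>(p::nat, q::nat, r::nat, s::nat, j::nat). (p + r - j, q + j + s, p, q, j, s))"
  have "finite L" unfolding L_def by (intro finite_SigmaI) auto
  have "finite R" unfolding R_def by (intro finite_SigmaI) auto
  have "(\<Sum>m\<le>n. \<Sum>n'\<le>n. \<Sum>p\<le>m. \<Sum>q\<le>n'. \<Sum>j\<le>n'. \<Sum>s\<le>n'.
            if q + j + s = n' then Psi p q (m - p + j) s j else 0) = sum f L"
    unfolding L_def f_def by (simp add: sum.Sigma split_def)
  also have "\<dots> = sum f (phi ` W)"
  proof (rule sum.mono_neutral_right[OF \<open>finite L\<close>])
    show "phi ` W \<subseteq> L" unfolding W_def phi_def L_def by auto
    show "\<forall>t\<in>L - phi ` W. f t = 0"
    proof
      fix t assume t: "t \<in> L - phi ` W"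
      obtain m n' p q j s where t_eq: "t = (m, n', p, q, j, s)" by (cases t) auto
      show "f t = 0"
      proof (cases "q + j + s = n'")
        case True
        have "p \<le> m" using t t_eq unfolding L_def by auto
        then have "t = phi (p, q, m - p + j, s, j)" using t_eq True unfolding phi_def by auto
        then have "(p, q, m - p + j, s, j) \<notin> W" using t by auto
        then have "n < p + q + (m - p + j) + s" unfolding W_def by auto
        then show ?thesis using vanish[of j "m - p + j" p q s] t_eq True unfolding f_def by auto
      qed (simp add: t_eq f_def)
    qed
  qed
  also have "\<dots> = sum (f \<circ> phi) W"
    by (rule sum.reindex) (auto simp: inj_on_def phi_def W_def)
  also have "\<dots> = sum (\<lambda>(p, q, r, s, j). Psi p q r s j) W"
    by (rule sum.cong) (auto simp: f_def phi_def W_def)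
  also have "\<dots> = sum (\<lambda>(p, q, r, s, j). Psi p q r s j) R"
    by (rule sum.mono_neutral_left[OF \<open>finite R\<close>]) (auto simp: W_def R_def intro!: vanish)
  also have "\<dots> = (\<Sum>p\<le>n. \<Sum>q\<le>n. \<Sum>r\<le>n. \<Sum>s\<le>n. \<Sum>j\<le>r. Psi p q r s j)"
    unfolding R_def by (simp add: sum.Sigma split_def)
  finally show ?thesis .
qed

lemma series_act_amul: "series_act Theta (amul g h) x = series_act Theta g (series_act Theta h x)"
proof (intro ext)
  fix i n
  define Psi where "Psi p q r s j
      = g p q * (h r s * (comm_coeff r j q * monomial_act Theta (p + r - j) (q + j + s) x i n))"
    for p q r s j
  have "series_act Theta (amul g h) x i n = (\<Sum>m\<le>n. \<Sum>n'\<le>n. \<Sum>p\<le>m. \<Sum>q\<le>n'. \<Sum>j\<le>n'. \<Sum>s\<le>n'.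
            if q + j + s = n' then Psi p q (m - p + j) s j else 0)"
    unfolding series_act_def amul_def sum_distrib_right
    by (intro sum.cong refl) (auto simp: Psi_def comm_coeff_def)
  also have "\<dots> = (\<Sum>p\<le>n. \<Sum>q\<le>n. \<Sum>r\<le>n. \<Sum>s\<le>n. \<Sum>j\<le>r. Psi p q r s j)"
    by (rule amul_sum_reindex) (simp add: Psi_def monomial_act_vanishes_below)
  also have "\<dots> = series_act Theta g (series_act Theta h x) i n"
    unfolding series_act_def[of Theta g] monomial_act_series_act Psi_def
    by (simp add: sum_distrib_left)
  finally show "series_act Theta (amul g h) x i n = series_act Theta g (series_act Theta h x) i n" .
qed

definition coeff_l1 :: "('k::finite \<Rightarrow> nat \<Rightarrow> complex) \<Rightarrow> nat \<Rightarrow> real" where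
  "coeff_l1 y m = (\<Sum>i\<in>UNIV. norm (y i m))"

definition entry_l1 :: "complex^'k^'k \<Rightarrow> real" where
  "entry_l1 Theta = (\<Sum>j\<in>UNIV. \<Sum>i\<in>UNIV. norm (Theta $ j $ i))"

lemma entry_l1_nonneg: "0 \<le> entry_l1 Theta"
  unfolding entry_l1_def by (intro sum_nonneg) auto

lemma coeff_l1_nonneg: "0 \<le> coeff_l1 y m"
  unfolding coeff_l1_def by (intro sum_nonneg) auto

lemma coeff_l1_a_act:
  "coeff_l1 (a_act Theta y) (Suc m) \<le> (entry_l1 Theta + of_nat m) * coeff_l1 y m"
proof -
  have row: "(\<Sum>i\<in>UNIV. norm (Theta $ j $ i)) \<le> entry_l1 Theta" for j
    unfolding entry_l1_def
    by (rule member_le_sum[where f = "\<lambda>j. \<Sum>i\<in>UNIV. norm (Theta $ j $ i)"]) (auto intro: sum_nonneg)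
  have "norm (a_act Theta y i (Suc m))
      \<le> (\<Sum>j\<in>UNIV. norm (Theta $ j $ i) * norm (y j m)) + of_nat m * norm (y i m)" for i
  proof -
    have "norm (a_act Theta y i (Suc m)) \<le> norm (\<Sum>j\<in>UNIV. Theta $ j $ i * y j m) + norm (of_nat m * y i m)"
      unfolding a_act_def by (simp add: norm_triangle_ineq)
    also have "\<dots> \<le> (\<Sum>j\<in>UNIV. norm (Theta $ j $ i) * norm (y j m)) + of_nat m * norm (y i m)"
      by (intro add_mono order_trans[OF norm_sum]) (auto simp: norm_mult)
    finally show ?thesis .
  qed
  then have "coeff_l1 (a_act Theta y) (Suc m)
      \<le> (\<Sum>i\<in>UNIV. (\<Sum>j\<in>UNIV. norm (Theta $ j $ i) * norm (y j m)) + of_nat m * norm (y i m))"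
    unfolding coeff_l1_def by (intro sum_mono)
  also have "\<dots> = (\<Sum>j\<in>UNIV. (\<Sum>i\<in>UNIV. norm (Theta $ j $ i)) * norm (y j m)) + of_nat m * coeff_l1 y m"
    unfolding coeff_l1_def by (simp add: sum.distrib sum_distrib_left sum_distrib_right) (rule sum.swap)
  also have "\<dots> \<le> (\<Sum>j\<in>UNIV. entry_l1 Theta * norm (y j m)) + of_nat m * coeff_l1 y m"
    by (intro add_mono[OF sum_mono order_refl] mult_right_mono row) simp
  also have "\<dots> = (entry_l1 Theta + of_nat m) * coeff_l1 y m"
    unfolding coeff_l1_def by (simp add: sum_distrib_left sum.distrib algebra_simps)
  finally show ?thesis .
qed

lemma coeff_l1_a_act_pow:
  "coeff_l1 ((a_act Theta ^^ p) y) (m + p) * fact m \<le> (entry_l1 Theta + 1) ^ p * fact (m + p) * coeff_l1 y m"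
proof (induction p)
  case 0
  then show ?case by simp
next
  case (Suc p)
  let ?K = "entry_l1 Theta"
  have K: "0 \<le> ?K" by (rule entry_l1_nonneg)
  have "coeff_l1 ((a_act Theta ^^ Suc p) y) (m + Suc p) * fact m
      \<le> (?K + of_nat (m + p)) * (coeff_l1 ((a_act Theta ^^ p) y) (m + p) * fact m)"
    using coeff_l1_a_act[of Theta "(a_act Theta ^^ p) y" "m + p"]
    by (simp add: mult.assoc mult_right_mono)
  also have "\<dots> \<le> (?K + of_nat (m + p)) * ((?K + 1) ^ p * fact (m + p) * coeff_l1 y m)"
    using K by (intro mult_left_mono Suc.IH) auto
  also have "\<dots> \<le> ((?K + 1) * of_nat (Suc (m + p))) * ((?K + 1) ^ p * fact (m + p) * coeff_l1 y m)"
    using K coeff_l1_nonneg[of y m] by (intro mult_right_mono) (auto simp: algebra_simps)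
  also have "\<dots> = (?K + 1) ^ Suc p * fact (m + Suc p) * coeff_l1 y m"
    by (simp add: algebra_simps)
  finally show ?case .
qed

lemma fact_mult_le_fact_add: "(fact q :: real) * fact m \<le> fact (q + m)"
proof -
  have "fact q * fact m \<le> (fact (q + m) :: nat)"
    by (intro dvd_imp_le fact_fact_dvd_fact) simp
  then show ?thesis
    by (metis of_nat_fact of_nat_le_iff of_nat_mult)
qed

lemma norm_monomial_act_le:
  fixes x :: "'k::finite \<Rightarrow> nat \<Rightarrow> complex" and N R :: real
  assumes x_bound: "\<And>i q. norm (x i q) \<le> N * R ^ q * fact q" and "p + q \<le> n"
  shows "fact q * norm (monomial_act Theta p q x i n)
    \<le> CARD('k) * N * (entry_l1 Theta + 1) ^ p * R ^ (n - p - q) * fact n"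
proof -
  define m where "m = n - p - q"
  have n: "n = m + q + p" using assms(2) unfolding m_def by simp
  let ?c = "real CARD('k)" and ?K = "entry_l1 Theta"
  have "norm (monomial_act Theta p q x i n) * fact (m + q)
      \<le> coeff_l1 ((a_act Theta ^^ p) (bshift q x)) (m + q + p) * fact (m + q)"
    unfolding coeff_l1_def monomial_act_def n by (intro mult_right_mono member_le_sum) auto
  also have "\<dots> \<le> (?K + 1) ^ p * fact n * coeff_l1 (bshift q x) (m + q)"
    unfolding n by (rule coeff_l1_a_act_pow)
  also have "coeff_l1 (bshift q x) (m + q) = coeff_l1 x m"
    unfolding coeff_l1_def bshift_def by simp
  also have "coeff_l1 x m \<le> (\<Sum>i\<in>(UNIV::'k set). N * R ^ m * fact m)"
    unfolding coeff_l1_def by (rule sum_mono) (rule x_bound)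
  also have "\<dots> = ?c * (N * R ^ m * fact m)"
    by simp
  finally have "norm (monomial_act Theta p q x i n) * fact (m + q)
      \<le> ?c * N * (?K + 1) ^ p * R ^ m * fact n * fact m"
    using entry_l1_nonneg[of Theta] by (simp add: mult_left_mono mult_ac)
  moreover have "fact q * norm (monomial_act Theta p q x i n) * fact m
      \<le> norm (monomial_act Theta p q x i n) * fact (m + q)"
    using mult_right_mono[OF fact_mult_le_fact_add[of q m], of "norm (monomial_act Theta p q x i n)"]
    by (simp add: mult_ac add.commute)
  ultimately have "fact q * norm (monomial_act Theta p q x i n) * fact m
      \<le> (?c * N * (?K + 1) ^ p * R ^ m * fact n) * fact m"
    by linarith
  then show ?thesis
    unfolding m_def by (simp only: mult_le_cancel_right_pos[OF fact_gt_zero])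
qed

lemma norm_series_act_le:
  fixes x :: "'k::finite \<Rightarrow> nat \<Rightarrow> complex" and M N R :: real
  assumes g_bound: "\<And>p q. norm (g p q) \<le> M * R ^ (p + q) * fact q"
    and x_bound: "\<And>i q. norm (x i q) \<le> N * R ^ q * fact q" and "0 \<le> R"
  shows "norm (series_act Theta g x i n)
    \<le> CARD('k) * M * N * (4 * ((entry_l1 Theta + 1) * R)) ^ n * fact n"
proof -
  let ?K = "entry_l1 Theta"
  let ?B = "CARD('k) * M * N * ((?K + 1) * R) ^ n * fact n"
  have "0 \<le> M" using order_trans[OF norm_ge_zero g_bound[of 0 0]] by simp
  moreover have "0 \<le> N" using order_trans[OF norm_ge_zero x_bound[of undefined 0]] by simp
  ultimately have B: "0 \<le> ?B" using \<open>0 \<le> R\<close> entry_l1_nonneg[of Theta] by simp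
  have summand_bound: "norm (g p q * monomial_act Theta p q x i n) \<le> ?B" for p q
  proof (cases "p + q \<le> n")
    case True
    have "norm (g p q * monomial_act Theta p q x i n)
        \<le> M * R ^ (p + q) * (fact q * norm (monomial_act Theta p q x i n))"
      using mult_right_mono[OF g_bound[of p q] norm_ge_zero[of "monomial_act Theta p q x i n"]]
      by (simp add: norm_mult mult_ac)
    also have "\<dots> \<le> M * R ^ (p + q) * (CARD('k) * N * (?K + 1) ^ p * R ^ (n - p - q) * fact n)"
      using \<open>0 \<le> M\<close> \<open>0 \<le> R\<close> norm_monomial_act_le[OF x_bound True]
      by (intro mult_left_mono) simp_all
    also have "\<dots> = CARD('k) * M * N * (?K + 1) ^ p * R ^ n * fact n"
      using True by (simp add: mult_ac flip: power_add)
    also have "\<dots> \<le> CARD('k) * M * N * (?K + 1) ^ n * R ^ n * fact n"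
      using True \<open>0 \<le> M\<close> \<open>0 \<le> N\<close> \<open>0 \<le> R\<close> entry_l1_nonneg[of Theta]
      by (intro mult_right_mono mult_left_mono power_increasing) simp_all
    finally show ?thesis by (simp add: power_mult_distrib mult_ac)
  qed (use B in \<open>simp add: monomial_act_vanishes_below\<close>)
  have "norm (series_act Theta g x i n) \<le> (\<Sum>p\<le>n. \<Sum>q\<le>n. ?B)"
    unfolding series_act_def
    by (intro order_trans[OF norm_sum] sum_mono order_trans[OF norm_sum] summand_bound)
  also have "\<dots> = (real n + 1) ^ 2 * ?B"
    by (simp add: power2_eq_square algebra_simps)
  also have "\<dots> \<le> 4 ^ n * ?B"
  proof (rule mult_right_mono[OF _ B])
    have "real n + 1 \<le> 2 ^ n"
      using less_exp[of n] by (metis Suc_leI add.commute of_nat_Suc of_nat_le_iff of_nat_numeral of_nat_power)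
    then have "(real n + 1) ^ 2 \<le> (2 ^ n) ^ 2" by (intro power_mono) auto
    then show "(real n + 1) ^ 2 \<le> 4 ^ n" by (simp add: power2_eq_square flip: power_mult_distrib)
  qed
  also have "\<dots> = CARD('k) * M * N * (4 * ((?K + 1) * R)) ^ n * fact n"
    unfolding power_mult_distrib[of 4] by (simp only: mult_ac)
  finally show ?thesis .
qed

lemma series_act_continuous:
  fixes Theta :: "complex^'k^'k" and R :: real
  assumes "1 < R"
  shows "\<exists>R'>1. \<exists>C>0. \<forall>g x M N.
    (\<forall>p q. norm (g p q) \<le> M * R ^ (p + q) * fact q) \<longrightarrow>
    (\<forall>i q. norm (x i q) \<le> N * R ^ q * fact q) \<longrightarrow>
    (\<forall>i n. norm (series_act Theta g x i n) \<le> C * M * N * R' ^ n * fact n)"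
proof (intro exI conjI allI impI)
  have "R \<le> (entry_l1 Theta + 1) * R"
    using assms entry_l1_nonneg[of Theta] by (simp add: algebra_simps)
  then show "1 < 4 * ((entry_l1 Theta + 1) * R)" using assms by linarith
  show "0 < real CARD('k)" by simp
  fix g :: "nat \<Rightarrow> nat \<Rightarrow> complex" and x :: "'k \<Rightarrow> nat \<Rightarrow> complex" and M N :: real and i n
  assume "\<forall>p q. norm (g p q) \<le> M * R ^ (p + q) * fact q" "\<forall>i q. norm (x i q) \<le> N * R ^ q * fact q"
  then show "norm (series_act Theta g x i n)
      \<le> real CARD('k) * M * N * (4 * ((entry_l1 Theta + 1) * R)) ^ n * fact n"
    using assms by (intro norm_series_act_le) simp_all
qed

lemma EThetaSpace_uniform_bound:
  fixes x :: "'k::finite \<Rightarrow> nat \<Rightarrow> complex"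
  assumes "x \<in> EThetaSpace"
  obtains N R where "0 < N" "1 < R" "\<And>i q. norm (x i q) \<le> N * R ^ q * fact q"
proof -
  have "\<forall>i. \<exists>C R. 0 < C \<and> 1 < R \<and> (\<forall>q. norm (x i q) \<le> C * R ^ q * fact q)"
    using assms unfolding EThetaSpace_def gevreyB_def by blast
  then obtain C Rx where bound: "\<And>i. 0 < C i \<and> 1 < Rx i \<and> (\<forall>q. norm (x i q) \<le> C i * Rx i ^ q * fact q)"
    by metis
  define N where "N = Max (range C)"
  define R where "R = Max (range Rx)"
  have le_N: "C i \<le> N" and le_R: "Rx i \<le> R" for i
    by (simp_all add: N_def R_def Max_ge)
  have "0 < N" "1 < R"
    using bound le_N le_R by (meson less_le_trans)+
  moreover have "norm (x i q) \<le> N * R ^ q * fact q" for i q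
  proof -
    have "C i * Rx i ^ q * fact q \<le> N * R ^ q * fact q"
      using bound[of i] le_N[of i] le_R[of i] \<open>0 < N\<close>
      by (intro mult_right_mono mult_mono power_mono) simp_all
    then show ?thesis using bound[of i] by (meson order_trans)
  qed
  ultimately show ?thesis using that by blast
qed

lemma gevrey_bound_mono:
  fixes M R R' f :: real
  assumes "norm z \<le> M * R ^ k * f" "0 \<le> M" "0 \<le> f" "0 \<le> R" "R \<le> R'"
  shows "norm z \<le> M * R' ^ k * f"
proof -
  have "M * R ^ k * f \<le> M * R' ^ k * f"
    using assms(2-) by (intro mult_right_mono mult_left_mono power_mono) simp_all
  then show ?thesis using assms(1) by linarith
qed

lemma series_act_EThetaSpace:
  fixes Theta :: "complex^'k^'k"
  assumes "g \<in> Atilde_conv" and "x \<in> EThetaSpace"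
  shows "series_act Theta g x \<in> EThetaSpace"
proof -
  obtain M Rg where "0 < M" "1 < Rg" and g_bound: "\<And>p q. norm (g p q) \<le> M * Rg ^ (p + q) * fact q"
    using assms(1) unfolding Atilde_conv_def by blast
  obtain N Rx where "0 < N" "1 < Rx" and x_bound: "\<And>i q. norm (x i q) \<le> N * Rx ^ q * fact q"
    using EThetaSpace_uniform_bound[OF assms(2)] by blast
  define R where "R = max Rg Rx"
  have "1 < R" using \<open>1 < Rg\<close> by (simp add: R_def)
  then obtain R' C where "1 < R'" "0 < C" and act_bound: "\<forall>g x M N.
      (\<forall>p q. norm (g p q) \<le> M * R ^ (p + q) * fact q) \<longrightarrow>
      (\<forall>i q. norm (x i q) \<le> N * R ^ q * fact q) \<longrightarrow>
      (\<forall>i n. norm (series_act Theta g x i n) \<le> C * M * N * R' ^ n * fact n)"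
    using series_act_continuous[of R Theta] by blast
  have "norm (g p q) \<le> M * R ^ (p + q) * fact q" for p q
    by (rule gevrey_bound_mono[OF g_bound]) (use \<open>0 < M\<close> \<open>1 < Rg\<close> in \<open>simp_all add: R_def\<close>)
  moreover have "norm (x i q) \<le> N * R ^ q * fact q" for i q
    by (rule gevrey_bound_mono[OF x_bound]) (use \<open>0 < N\<close> \<open>1 < Rx\<close> in \<open>simp_all add: R_def\<close>)
  ultimately have "norm (series_act Theta g x i n) \<le> (C * M * N) * R' ^ n * fact n" for i n
    using act_bound by blast
  moreover have "0 < C * M * N"
    using \<open>0 < C\<close> \<open>0 < M\<close> \<open>0 < N\<close> by simp
  ultimately show ?thesis
    unfolding EThetaSpace_def gevreyB_def using \<open>1 < R'\<close> by blast
qed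

theorem corollary1p1p9:
  fixes Theta :: "complex^'k^'k"
  assumes "\<forall>n::nat. - of_nat n \<notin> mat_spectrum Theta"
  shows "\<exists>act :: (nat \<Rightarrow> nat \<Rightarrow> complex) \<Rightarrow> ('k \<Rightarrow> nat \<Rightarrow> complex) \<Rightarrow> ('k \<Rightarrow> nat \<Rightarrow> complex).
      (\<forall>g\<in>Atilde_conv. \<forall>x\<in>EThetaSpace. act g x \<in> EThetaSpace)
    \<and> (\<forall>g\<in>Atilde_conv. \<forall>h\<in>Atilde_conv. \<forall>x\<in>EThetaSpace.
          act (\<lambda>p q. g p q + h p q) x = (\<lambda>i n. act g x i n + act h x i n))
    \<and> (\<forall>g\<in>Atilde_conv. \<forall>c. \<forall>x\<in>EThetaSpace.
          act (\<lambda>p q. c * g p q) x = (\<lambda>i n. c * act g x i n))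
    \<and> (\<forall>g\<in>Atilde_conv. \<forall>x\<in>EThetaSpace. \<forall>y\<in>EThetaSpace.
          act g (\<lambda>i n. x i n + y i n) = (\<lambda>i n. act g x i n + act g y i n))
    \<and> (\<forall>g\<in>Atilde_conv. \<forall>c. \<forall>x\<in>EThetaSpace.
          act g (\<lambda>i n. c * x i n) = (\<lambda>i n. c * act g x i n))
    \<and> (\<forall>g\<in>Atilde_conv. \<forall>h\<in>Atilde_conv. \<forall>x\<in>EThetaSpace.
          act (amul g h) x = act g (act h x))
    \<and> (\<forall>x\<in>EThetaSpace. act a_elem x = a_act Theta x)
    \<and> (\<forall>S\<in>gevreyB. \<forall>x\<in>EThetaSpace. act (embB S) x = B_smul S x)
    \<and> (\<forall>R>1. \<exists>R'>1. \<exists>C>0. \<forall>g x M N.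
          (\<forall>p q. norm (g p q) \<le> M * R ^ (p + q) * fact q) \<longrightarrow>
          (\<forall>i q. norm (x i q) \<le> N * R ^ q * fact q) \<longrightarrow>
          (\<forall>i n. norm (act g x i n) \<le> C * M * N * R' ^ n * fact n))"
proof (intro exI[of _ "series_act Theta"] conjI ballI allI impI)
  fix R :: real
  assume "1 < R"
  then show "\<exists>R'>1. \<exists>C>0. \<forall>g x M N.
      (\<forall>p q. norm (g p q) \<le> M * R ^ (p + q) * fact q) \<longrightarrow>
      (\<forall>i q. norm (x i q) \<le> N * R ^ q * fact q) \<longrightarrow>
      (\<forall>i n. norm (series_act Theta g x i n) \<le> C * M * N * R' ^ n * fact n)"
    by (rule series_act_continuous)
qed (simp_all add: series_act_EThetaSpace series_act_add series_act_smul series_act_amul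
       series_act_a_elem series_act_embB linear_op_add[OF linear_op_series_act]
       linear_op_smul[OF linear_op_series_act])

end
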